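(* Let $\mathcal{X}=[0,r]^d$ and let $f:\mathcal{X}\to\mathbb{R}$ be continuous with a unique maximizer $\bm{x}^*$, and suppose $c_{\mathrm{gap}}>0$ is such that $f(\bm{x}^* )>f(\tilde{\bm{x}})+c_{\mathrm{gap}}$ for every local maximizer $\tilde{\bm{x}}\neq\bm{x}^*$ of $f$ on $\mathcal{X}$. Then: (i) If $c_{\mathrm{lin}},\rho_{\mathrm{lin}}>0$ satisfy $f(\bm{x})\le f(\bm{x}^* )-c_{\mathrm{lin}}\|\bm{x}^*-\bm{x}\|_2$ for all $\bm{x}\in\mathcal{B}_2(\rho_{\mathrm{lin}};\bm{x}^* )$, then every $\bm{x}\in\mathcal{X}$ with $f(\bm{x}^* )-f(\bm{x})\le\varepsilon_1$, where $\varepsilon_1=\min\{c_{\mathrm{gap}},c_{\mathrm{lin}}\rho_{\mathrm{lin}}\}$, belongs to $\mathcal{B}_2(\rho_{\mathrm{lin}};\bm{x}^* )$. (ii) If $c_{\mathrm{quad}},\rho_{\mathrm{quad}}>0$ satisfy $f(\bm{x})\le f(\bm{x}^* )-c_{\mathrm{quad}}\|\bm{x}^*-\bm{x}\|_2^2$ for all $\bm{x}\in\mathcal{B}_2(\rho_{\mathrm{quad}};\bm{x}^* )$, then every $\bm{x}\in\mathcal{X}$ with $f(\bm{x}^* )-f(\bm{x})\le\varepsilon_2$, where $\varepsilon_2=\min\{c_{\mathrm{gap}},c_{\mathrm{quad}}\rho_{\mathrm{quad}}^2\}$, belongs to $\mathcal{B}_2(\rho_{\mathrm{quad}};\bm{x}^*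 )$.
   Context: $\mathcal{B}_2(\rho;\bm{x}^* )=\{\bm{x}\in\mathcal{X}:\|\bm{x}-\bm{x}^*\|_2\le\rho\}$. *)

theory Defs
  imports "HOL-Analysis.Analysis"
begin

text \<open>The box [0,r]^d, with d = CARD('n).\<close>
definition box_cube :: "real \<Rightarrow> (real ^ 'n) set" where
  "box_cube r = {x. \<forall>i. 0 \<le> x $ i \<and> x $ i \<le> r}"

definition local_maximizer_on :: "('a::metric_space \<Rightarrow> real) \<Rightarrow> 'a set \<Rightarrow> 'a \<Rightarrow> bool" where
  "local_maximizer_on f X x \<longleftrightarrow> x \<in> X \<and> (\<exists>e>0. \<forall>y\<in>X. dist y x < e \<longrightarrow> f y \<le> f x)"

definition ball2 :: "'a::real_normed_vector set \<Rightarrow> real \<Rightarrow> 'a \<Rightarrow> 'a set" where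
  "ball2 X \<rho> xs = {x \<in> X. norm (x - xs) \<le> \<rho>}"

end

theory Submission
  imports Defs
begin

text \<open>Suppose x \<in> X lies outside the closed ball of radius \<rho> around the maximizer c, with
  f c - f x \<le> min c_gap \<delta>, while f \<le> f c - \<delta> on the sphere of radius \<rho>. The maximum of f
  over the compact set X - ball c \<rho> is at least f x; if it lies strictly outside the closed ball
  it is a local maximizer of f on X, and if it lies on the sphere it is at most f x, so x itself
  maximizes f there and is a local maximizer. Either way a local maximizer w \<noteq> c has
  f w \<ge> f x \<ge> f c - c_gap, contradicting the gap.
  The linear and quadratic growth conditions give \<delta> = c_lin \<rho>_lin and \<delta> = c_quad \<rho>_quad^2.\<close>

lemma compact_box_cube: "compact (box_cube r)"
proof -
  have "box_cube r = cbox 0 (\<chi> i. r)"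
    by (auto simp: box_cube_def mem_box_cart)
  then show ?thesis
    using compact_cbox by metis
qed

lemma local_maximizer_on_if_maximizer_off_ball:
  fixes f :: "'a::metric_space \<Rightarrow> real"
  assumes "w \<in> X" and "\<rho> < dist c w" and max: "\<forall>y\<in>X - ball c \<rho>. f y \<le> f w"
  shows "local_maximizer_on f X w"
  unfolding local_maximizer_on_def
proof (intro conjI exI[of _ "dist c w - \<rho>"] ballI impI)
  fix y assume "y \<in> X" and "dist y w < dist c w - \<rho>"
  moreover have "dist c w \<le> dist c y + dist y w"
    by (rule dist_triangle)
  ultimately have "y \<in> X - ball c \<rho>"
    by auto
  then show "f y \<le> f w"
    using max by blast
qed (use assms in auto)

lemma local_maximizer_on_off_cball:
  fixes f :: "'a::metric_space \<Rightarrow> real"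
  assumes "compact X" and "continuous_on X f" and "x \<in> X" and "\<rho> < dist c x"
    and sphere: "\<forall>y\<in>X. dist c y = \<rho> \<longrightarrow> f y \<le> f x"
  obtains w where "local_maximizer_on f X w" and "\<rho> < dist c w" and "f x \<le> f w"
proof -
  have "compact (X - ball c \<rho>)"
    using \<open>compact X\<close> by (simp add: Diff_eq compact_Int_closed closed_Compl)
  moreover have "continuous_on (X - ball c \<rho>) f"
    using \<open>continuous_on X f\<close> by (rule continuous_on_subset) blast
  moreover have x_off: "x \<in> X - ball c \<rho>"
    using assms by simp
  ultimately obtain z where z_off: "z \<in> X - ball c \<rho>" and z_max: "\<forall>y\<in>X - ball c \<rho>. f y \<le> f z"
    using continuous_attains_sup by blast
  show ?thesis
  proof (cases "\<rho> < dist c z")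
    case True
    then show ?thesis
      using that local_maximizer_on_if_maximizer_off_ball z_off z_max x_off by blast
  next
    case False
    then have "f z \<le> f x"
      using sphere z_off by auto
    then have "\<forall>y\<in>X - ball c \<rho>. f y \<le> f x"
      using z_max by (meson order_trans)
    then show ?thesis
      using that local_maximizer_on_if_maximizer_off_ball assms(3,4) by blast
  qed
qed

lemma sublevel_set_subset_cball:
  fixes f :: "'a::metric_space \<Rightarrow> real"
  assumes "compact X" and "continuous_on X f" and "0 \<le> \<rho>"
    and gap: "\<forall>w. local_maximizer_on f X w \<and> w \<noteq> c \<longrightarrow> f c > f w + c_gap"
    and sphere: "\<forall>y\<in>X. dist c y = \<rho> \<longrightarrow> f y \<le> f c - \<delta>"
    and "x \<in> X" and sub: "f c - f x \<le> min c_gap \<delta>"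
  shows "dist c x \<le> \<rho>"
proof (rule ccontr)
  assume "\<not> dist c x \<le> \<rho>"
  moreover have "\<forall>y\<in>X. dist c y = \<rho> \<longrightarrow> f y \<le> f x"
    using sphere sub by fastforce
  ultimately obtain w where "local_maximizer_on f X w" and "\<rho> < dist c w" and "f x \<le> f w"
    using local_maximizer_on_off_cball assms(1,2,6) by (metis not_le)
  moreover from this have "w \<noteq> c"
    using \<open>0 \<le> \<rho>\<close> by auto
  ultimately show False
    using gap sub by fastforce
qed

lemma sublevel_set_subset_ball2:
  fixes f :: "'a::real_normed_vector \<Rightarrow> real" and g :: "real \<Rightarrow> real"
  assumes "compact X" and "continuous_on X f" and "0 \<le> \<rho>"
    and gap: "\<forall>w. local_maximizer_on f X w \<and> w \<noteq> c \<longrightarrow> f c > f w + c_gap"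
    and growth: "\<forall>x\<in>ball2 X \<rho> c. f x \<le> f c - g (norm (c - x))"
    and "x \<in> X" and "f c - f x \<le> min c_gap (g \<rho>)"
  shows "x \<in> ball2 X \<rho> c"
proof -
  have "\<forall>y\<in>X. dist c y = \<rho> \<longrightarrow> f y \<le> f c - g \<rho>"
    using growth by (auto simp: ball2_def dist_norm norm_minus_commute)
  then have "dist c x \<le> \<rho>"
    using sublevel_set_subset_cball assms(1-4,6,7) by blast
  then show ?thesis
    using \<open>x \<in> X\<close> by (simp add: ball2_def dist_norm norm_minus_commute)
qed

theorem lemma15:
  fixes f :: "real ^ 'n \<Rightarrow> real" and r c_gap :: real and xs :: "real ^ 'n"
  assumes cont: "continuous_on (box_cube r) f"
    and xs_in: "xs \<in> box_cube r"
    and unique: "\<forall>x\<in>box_cube r. x \<noteq> xs \<longrightarrow> f x < f xs"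
    and gap_pos: "c_gap > 0"
    and gap: "\<forall>x'. local_maximizer_on f (box_cube r) x' \<and> x' \<noteq> xs \<longrightarrow> f xs > f x' + c_gap"
  shows "(\<forall>c_lin \<rho>_lin. c_lin > 0 \<and> \<rho>_lin > 0 \<and>
             (\<forall>x\<in>ball2 (box_cube r) \<rho>_lin xs. f x \<le> f xs - c_lin * norm (xs - x)) \<longrightarrow>
             (\<forall>x\<in>box_cube r. f xs - f x \<le> min c_gap (c_lin * \<rho>_lin) \<longrightarrow>
                 x \<in> ball2 (box_cube r) \<rho>_lin xs))
       \<and> (\<forall>c_quad \<rho>_quad. c_quad > 0 \<and> \<rho>_quad > 0 \<and>
             (\<forall>x\<in>ball2 (box_cube r) \<rho>_quad xs. f x \<le> f xs - c_quad * (norm (xs - x))\<^sup>2) \<longrightarrow>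
             (\<forall>x\<in>box_cube r. f xs - f x \<le> min c_gap (c_quad * \<rho>_quad\<^sup>2) \<longrightarrow>
                 x \<in> ball2 (box_cube r) \<rho>_quad xs))"
proof (intro conjI allI impI ballI; elim conjE)
  fix c \<rho> x
  assume "\<rho> > 0" and "\<forall>x\<in>ball2 (box_cube r) \<rho> xs. f x \<le> f xs - c * norm (xs - x)"
    and "x \<in> box_cube r" and "f xs - f x \<le> min c_gap (c * \<rho>)"
  then show "x \<in> ball2 (box_cube r) \<rho> xs"
    using sublevel_set_subset_ball2[OF compact_box_cube cont _ gap, where g = "\<lambda>t. c * t"]
    by simp
next
  fix c \<rho> x
  assume "\<rho> > 0" and "\<forall>x\<in>ball2 (box_cube r) \<rho> xs. f x \<le> f xs - c * (norm (xs - x))\<^sup>2"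
    and "x \<in> box_cube r" and "f xs - f x \<le> min c_gap (c * \<rho>\<^sup>2)"
  then show "x \<in> ball2 (box_cube r) \<rho> xs"
    using sublevel_set_subset_ball2[OF compact_box_cube cont _ gap, where g = "\<lambda>t. c * t\<^sup>2"]
    by simp
qed

end
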